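(* For the ternary soft heap with error parameter $0<\epsilon<1$, any sequence of operations consisting of $N$ insertions and $\delta$ extract-min operations takes total time $O(N+\delta\lg\frac1\epsilon)$ (for $\epsilon\le 1/2$); that is, \textsf{insert} takes amortized $O(1)$ time and \textsf{extract-min} amortized $O(\lg\frac1\epsilon)$ time.
   Context: Ternary soft heap with error parameter $0<\epsilon<1$ and threshold $r_0=\max(2,\lceil\lg(1/\epsilon)\rceil)$ ($\lg$ = binary logarithm). Items are (key, value) pairs with distinct keys from a totally ordered universe. A rank-$r$ tree is a perfectly balanced rooted tree in which every internal node has exactly $3$ children and all $3^r$ leaves are at depth $r$; a node whose subtree has height $r$ has rank $r$. Each leaf corresponds to a distinct insertion. Each node holds at most one item (it may be empty); the tree is heap-ordered (an item's key is at most the keys of items at descendants). Each item $e$ held at a node carries a corruption-set $C(e)$ (empty when inserted), stored as a cyclic linked list allowing constant-time concatenation. The heap is a list of trees in nondecreasing rank order, with at most $2$ trees of each rank, together with, for each root, a suffix-min reference to the root with minimum item among it and all later roots. \textsf{insert}$(e)$: add a rank-$0$ tree holding $e$ at the front; while the first three trees have equal rank $r$, link them: create a new node of rank $r+1$ with the three roots as children and fill it; then update the suffix-min reference of the first tree. Filling an empty node $v$ of rank $r$: a single pull moves to $v$ the minimum-key item among $v$'s children and then recursively fills the child it came from (a node whose subtree holds no items stays empty). If $r\le r_0$, $v$ is filled by one pull; if $r>r_0$, two items $e_1,e_2$ with $\mathrm{key}(e_1)\le\mathrm{key}(e_2)$ are pulled up successively, $e_1$ and all of $C(e_1)$ are added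 to $C(e_2)$ ($e_1$ becomes corrupted), and $e_2$ is stored at $v$ (if only one item is available, it is stored). \textsf{extract-min}: let $e$ be the minimum-key item among roots (found via the first suffix-min reference); if $C(e)\neq\emptyset$, remove and return an item of $C(e)$ with current key $\mathrm{key}(e)$; otherwise remove $e$, refill its root, update the suffix-min references from that root back to the front of the list, and return $e$ with the corruptions created. *)

theory Defs
  imports Complex_Main
begin

text \<open>A cell is the content of a node: the item held there together with its
corruption-set (a list, concatenation being O(1) as for cyclic lists).\<close>

type_synonym ('k,'v) item = "'k \<times> 'v"
type_synonym ('k,'v) cell = "('k,'v) item \<times> ('k,'v) item list"

text \<open>A node: its rank, its (optional) cell, and its children (3 for internal
nodes, none for leaves).\<close>
datatype ('k,'v) tree =
  Nd (rank: nat) (cell: "('k,'v) cell option") (kids: "('k,'v) tree list")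

definition ckey :: "('k,'v) cell \<Rightarrow> 'k" where
  "ckey c = fst (fst c)"

text \<open>Returns the pulled cell (if any), the
new children and the cost (number of elementary steps).\<close>
definition pull ::
  "(('k::linorder,'v) tree \<Rightarrow> ('k,'v) tree \<times> nat) \<Rightarrow> ('k,'v) tree list
     \<Rightarrow> ('k,'v) cell option \<times> ('k,'v) tree list \<times> nat" where
  "pull fl cs =
    (let I = {i. i < length cs \<and> cell (cs!i) \<noteq> None} in
     if I = {} then (None, cs, 1)
     else
       (let i = arg_min (\<lambda>i. ckey (the (cell (cs!i)))) (\<lambda>i. i \<in> I);
            ch = cs!i;
            (ch', k) = fl (Nd (rank ch) None (kids ch))
        in (cell ch, cs[i := ch'], 1 + k)))"

fun corrupt :: "('k,'v) cell option \<Rightarrow> ('k,'v) cell option \<Rightarrow> ('k,'v) cell option" where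
  "corrupt (Some (e1, C1)) (Some (e2, C2)) = Some (e2, C2 @ (e1 # C1))"
| "corrupt x None = x"
| "corrupt None y = y"

definition fill_step ::
  "nat \<Rightarrow> (('k::linorder,'v) tree \<Rightarrow> ('k,'v) tree \<times> nat) \<Rightarrow> ('k,'v) tree
     \<Rightarrow> ('k,'v) tree \<times> nat" where
  "fill_step r0 fl t =
    (let r = rank t; cs = kids t in
     if r \<le> r0 then
       (let (x, cs1, k1) = pull fl cs in (Nd r x cs1, 1 + k1))
     else
       (let (x1, cs1, k1) = pull fl cs;
            (x2, cs2, k2) = pull fl cs1
        in (Nd r (corrupt x1 x2) cs2, 1 + k1 + k2)))"

text \<open>Fill with explicit fuel (the recursion depth is bounded by the rank).\<close>
primrec fillf :: "nat \<Rightarrow> nat \<Rightarrow> ('k::linorder,'v) tree \<Rightarrow> ('k,'v) tree \<times> nat" where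
  "fillf 0 r0 t = (t, 1)"
| "fillf (Suc f) r0 t = fill_step r0 (fillf f r0) t"

definition fill :: "nat \<Rightarrow> ('k::linorder,'v) tree \<Rightarrow> ('k,'v) tree \<times> nat" where
  "fill r0 t = fillf (Suc (rank t)) r0 t"

function (sequential) link_loop ::
  "nat \<Rightarrow> ('k::linorder,'v) tree list \<Rightarrow> ('k,'v) tree list \<times> nat" where
  "link_loop r0 (t1 # t2 # t3 # ts) =
    (if rank t1 = rank t2 \<and> rank t2 = rank t3 then
       (let (v, k) = fill r0 (Nd (Suc (rank t1)) None [t1, t2, t3]);
            (ts', k') = link_loop r0 (v # ts)
        in (ts', 1 + k + k'))
     else (t1 # t2 # t3 # ts, 1))"
| "link_loop r0 ts = (ts, 1)"
  by pat_completeness auto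
termination by (relation "measure (\<lambda>(r0, ts). length ts)") auto

text \<open>insert: create the rank-0 tree (cost 1), run the linking loop, update the
suffix-min reference of the first tree (cost 1).\<close>
definition ins :: "nat \<Rightarrow> ('k::linorder,'v) item \<Rightarrow> ('k,'v) tree list
     \<Rightarrow> ('k,'v) tree list \<times> nat" where
  "ins r0 e ts = (let (ts', k) = link_loop r0 (Nd 0 (Some (e, [])) [] # ts) in (ts', k + 2))"

definition root_idx :: "('k,'v) tree list \<Rightarrow> nat set" where
  "root_idx ts = {i. i < length ts \<and> cell (ts!i) \<noteq> None}"

definition min_root :: "('k::linorder,'v) tree list \<Rightarrow> nat" where
  "min_root ts = arg_min (\<lambda>i. ckey (the (cell (ts!i)))) (\<lambda>i. i \<in> root_idx ts)"

text \<open>extract-min (as a relation: when C(e) is nonempty, any of its items may be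
removed).  The last component is the cost.  In the third case the cost counts the
refill and the update of the suffix-min references of roots 0..j.\<close>
inductive ext_step :: "nat \<Rightarrow> ('k::linorder,'v) tree list \<Rightarrow> ('k,'v) tree list \<Rightarrow> nat \<Rightarrow> bool"
  for r0 where
  ext_empty: "root_idx ts = {} \<Longrightarrow> ext_step r0 ts ts 1"
| ext_corr: "root_idx ts \<noteq> {} \<Longrightarrow> j = min_root ts \<Longrightarrow> cell (ts!j) = Some (e, C) \<Longrightarrow>
     x \<in> set C \<Longrightarrow>
     ext_step r0 ts (ts[j := Nd (rank (ts!j)) (Some (e, remove1 x C)) (kids (ts!j))]) 1"
| ext_own: "root_idx ts \<noteq> {} \<Longrightarrow> j = min_root ts \<Longrightarrow> cell (ts!j) = Some (e, []) \<Longrightarrow>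
     fill r0 (Nd (rank (ts!j)) None (kids (ts!j))) = (t', k) \<Longrightarrow>
     ext_step r0 ts (ts[j := t']) (1 + k + (j + 1))"

datatype ('k,'v) hop = Insert "('k,'v) item" | ExtractMin

inductive exec :: "nat \<Rightarrow> ('k::linorder,'v) tree list \<Rightarrow> ('k,'v) hop list \<Rightarrow> nat \<Rightarrow> bool"
  for r0 where
  exec_nil: "exec r0 ts [] 0"
| exec_ins: "ins r0 e ts = (ts', k) \<Longrightarrow> exec r0 ts' ops c \<Longrightarrow> exec r0 ts (Insert e # ops) (k + c)"
| exec_ext: "ext_step r0 ts ts' k \<Longrightarrow> exec r0 ts' ops c \<Longrightarrow> exec r0 ts (ExtractMin # ops) (k + c)"

definition inserted :: "('k,'v) hop list \<Rightarrow> ('k,'v) item list" where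
  "inserted ops = [e. Insert e \<leftarrow> ops]"

definition n_ext :: "('k,'v) hop list \<Rightarrow> nat" where
  "n_ext ops = length (filter (\<lambda>h. h = ExtractMin) ops)"

definition thr :: "real \<Rightarrow> nat" where
  "thr \<epsilon> = max 2 (nat \<lceil>log 2 (1 / \<epsilon>)\<rceil>)"

end

theory Submission
  imports Defs
begin

text \<open>The analysis is amortized with a potential function.  A node of rank r > r0 has room for
2^(r-r0) items (its own item together with its corruption-set); its potential is kappa = 4 r0 + 5
times its unused room, plus 2r + 5 if it holds an item and 5 if one of its children does.  Nodes
of rank at most r0 carry no potential.  Filling an empty node of rank s then costs amortized
2s + 2 if s \<le> r0 and kappa 2^(s-r0) + O(1) otherwise: every pull from a child is paid by the
credit of the item pulled out, and the room used up by the pulled items is room the children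
regain.  A root of rank r carries the additional credit 3r + 6 + kappa 2^(r+1-r0), so the three
roots joined by a link pay for filling the new root, and an insertion costs O(1) amortized.  An
extract-min either returns a corrupted item, which raises the potential by kappa = O(r0), or
refills a root; the roots are at most two per rank, so that root sits at position at most
2r + 1 in the list, which its item's credit 2r + 2 pays for.  Finally r0 \<le> 2 lg(1/eps).\<close>

lemma sum_list_list_update:
  fixes xs :: "'a::ab_group_add list"
  shows "i < length xs \<Longrightarrow> sum_list (xs[i := x]) = sum_list xs - xs ! i + x"
proof (induction xs arbitrary: i)
  case (Cons y ys)
  then show ?case by (cases i) (simp_all add: algebra_simps)
qed simp

fun cell_size :: "('k,'v) cell option \<Rightarrow> nat" where
  "cell_size None = 0"
| "cell_size (Some (e, C)) = Suc (length C)"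

fun wf_tree :: "nat \<Rightarrow> ('k,'v) tree \<Rightarrow> bool" where
  "wf_tree r0 (Nd r c ks) \<longleftrightarrow>
     cell_size c \<le> 2 ^ (r - r0) \<and> (\<forall>k\<in>set ks. Suc (rank k) = r \<and> wf_tree r0 k)"

definition has_item :: "('k,'v) tree list \<Rightarrow> bool" where
  "has_item ts \<longleftrightarrow> (\<exists>t\<in>set ts. cell t \<noteq> None)"

text \<open>A pull at rank r0 + 1 takes its item from a child of rank r0, which frees no potential; a
node of rank r0 + 1 filled by a single such pull fits into its fill bound only if
kappa \<ge> 4 r0 + 4.\<close>
definition kappa :: "nat \<Rightarrow> real" where
  "kappa r0 = 4 * real r0 + 5"

definition node_pot :: "nat \<Rightarrow> nat \<Rightarrow> ('k,'v) cell option \<Rightarrow> ('k,'v) tree list \<Rightarrow> real" where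
  "node_pot r0 r c ks = kappa r0 * (2 ^ (r - r0) - real (cell_size c))
     + (if c = None then 0 else 2 * real r + 5) + (if has_item ks then 5 else 0)"

fun tree_pot :: "nat \<Rightarrow> ('k,'v) tree \<Rightarrow> real" where
  "tree_pot r0 (Nd r c ks) = (if r0 < r then node_pot r0 r c ks + (\<Sum>k\<leftarrow>ks. tree_pot r0 k) else 0)"

definition fill_bound :: "nat \<Rightarrow> nat \<Rightarrow> ('k,'v) tree list \<Rightarrow> real" where
  "fill_bound r0 s ks = (if s \<le> r0 then 2 * real s + 2
     else kappa r0 * 2 ^ (s - r0) + 3 + (if has_item ks then 5 else 0))"

definition pull_gain :: "nat \<Rightarrow> nat \<Rightarrow> ('k,'v) cell \<Rightarrow> real" where
  "pull_gain r0 s a = (if r0 < s then 2 * real s + 2 - kappa r0 * real (cell_size (Some a))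
     else - (2 * real s + 2))"

definition fills_within_bound ::
  "nat \<Rightarrow> (('k,'v) tree \<Rightarrow> ('k,'v) tree \<times> nat) \<Rightarrow> nat \<Rightarrow> bool" where
  "fills_within_bound r0 fl s \<longleftrightarrow> (\<forall>ks t' k.
     wf_tree r0 (Nd s None ks) \<longrightarrow> fl (Nd s None ks) = (t', k) \<longrightarrow>
     wf_tree r0 t' \<and> rank t' = s \<and>
     real k + tree_pot r0 t' \<le> fill_bound r0 s ks + (\<Sum>t\<leftarrow>ks. tree_pot r0 t))"

lemma fills_within_boundD:
  assumes "fills_within_bound r0 fl s" "wf_tree r0 (Nd s None ks)" "fl (Nd s None ks) = (t', k)"
  shows "wf_tree r0 t' \<and> rank t' = s \<and>
    real k + tree_pot r0 t' \<le> fill_bound r0 s ks + (\<Sum>t\<leftarrow>ks. tree_pot r0 t)"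
  using assms unfolding fills_within_bound_def by blast

lemma cell_size_Some_ge_1: "1 \<le> cell_size (Some a)"
  by (cases a) simp

lemma cell_size_corrupt:
  "cell_size (corrupt (Some a) (Some b)) = cell_size (Some a) + cell_size (Some b)"
  by (cases a; cases b) simp

lemma corrupt_Some_Some_neq_None: "corrupt (Some a) (Some b) \<noteq> None"
  by (cases a; cases b) simp

lemma wf_tree_clear_root: "wf_tree r0 t \<Longrightarrow> wf_tree r0 (Nd (rank t) None (kids t))"
  by (cases t) simp

lemma tree_pot_low_rank: "rank t \<le> r0 \<Longrightarrow> tree_pot r0 t = 0"
  by (cases t) simp

lemma sum_tree_pot_low_rank:
  "\<forall>t\<in>set ts. rank t \<le> r0 \<Longrightarrow> (\<Sum>t\<leftarrow>ts. tree_pot r0 t) = 0"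
  by (induction ts) (simp_all add: tree_pot_low_rank)

lemma tree_pot_nonneg: "wf_tree r0 t \<Longrightarrow> 0 \<le> tree_pot r0 t"
proof (induction t)
  case (Nd r c ks)
  have "real (cell_size c) \<le> 2 ^ (r - r0)"
    using Nd.prems by (simp flip: of_nat_le_iff)
  then have "0 \<le> node_pot r0 r c ks"
    unfolding node_pot_def by (simp add: kappa_def)
  moreover have "0 \<le> (\<Sum>k\<leftarrow>ks. tree_pot r0 k)"
    using Nd by (intro sum_list_nonneg) auto
  ultimately show ?case by simp
qed

lemma tree_pot_with_root:
  assumes "wf_tree r0 t" "cell t = Some a"
  shows "tree_pot r0 t =
    fill_bound r0 (rank t) (kids t) + (\<Sum>k\<leftarrow>kids t. tree_pot r0 k) + pull_gain r0 (rank t) a"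
proof (cases t)
  case (Nd r c ks)
  show ?thesis
  proof (cases "r0 < r")
    case True
    then show ?thesis
      using assms Nd by (simp add: fill_bound_def pull_gain_def node_pot_def algebra_simps)
  next
    case False
    then have "(\<Sum>k\<leftarrow>ks. tree_pot r0 k) = 0"
      using assms Nd by (intro sum_tree_pot_low_rank) auto
    then show ?thesis
      using assms Nd False by (simp add: fill_bound_def pull_gain_def)
  qed
qed

lemma pull_gain_ge:
  assumes "r0 \<le> s"
  shows "2 * real s + 2 - kappa r0 * real (cell_size (Some a)) \<le> pull_gain r0 s a"
proof (cases "r0 < s")
  case False
  have "kappa r0 \<le> kappa r0 * real (cell_size (Some a))"
    using cell_size_Some_ge_1[of a] by (simp add: kappa_def)
  moreover have "pull_gain r0 s a = - (2 * real s + 2)" "real s = real r0"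
    using assms False by (simp_all add: pull_gain_def)
  ultimately show ?thesis
    unfolding kappa_def by linarith
qed (simp add: pull_gain_def)

lemma pull_no_item:
  assumes "\<not> has_item cs"
  shows "pull fl cs = (None, cs, 1)"
proof -
  have "{i. i < length cs \<and> cell (cs ! i) \<noteq> None} = {}"
    using assms nth_mem unfolding has_item_def by blast
  then show ?thesis
    unfolding pull_def by simp
qed

lemma pull_item:
  assumes "has_item cs"
  obtains i where "i < length cs" "cell (cs ! i) \<noteq> None"
    "pull fl cs = (cell (cs ! i), cs[i := fst (fl (Nd (rank (cs ! i)) None (kids (cs ! i))))],
                   1 + snd (fl (Nd (rank (cs ! i)) None (kids (cs ! i)))))"
proof -
  define I where "I = {i. i < length cs \<and> cell (cs ! i) \<noteq> None}"
  define i where "i = arg_min (\<lambda>i. ckey (the (cell (cs ! i)))) (\<lambda>i. i \<in> I)"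
  obtain t where "t \<in> set cs" "cell t \<noteq> None"
    using assms unfolding has_item_def by blast
  then have "I \<noteq> {}"
    unfolding I_def by (auto simp: in_set_conv_nth)
  then have "i \<in> I"
    using arg_min_if_finite(1)[of I] unfolding i_def arg_min_on_def I_def by simp
  moreover have "pull fl cs = (cell (cs ! i), cs[i := fst (fl (Nd (rank (cs ! i)) None (kids (cs ! i))))],
                   1 + snd (fl (Nd (rank (cs ! i)) None (kids (cs ! i)))))"
    using \<open>I \<noteq> {}\<close> unfolding pull_def Let_def I_def[symmetric] i_def[symmetric]
    by (simp split: prod.split)
  ultimately show ?thesis
    using that unfolding I_def by blast
qed

lemma pull_None_iff:
  assumes "pull fl cs = (x, cs', c)"
  shows "x = None \<longleftrightarrow> \<not> has_item cs"
proof (cases "has_item cs")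
  case True
  then obtain i where "cell (cs ! i) \<noteq> None" "x = cell (cs ! i)"
    using assms by (metis pull_item fst_conv)
  with True show ?thesis by simp
qed (use assms pull_no_item[of cs fl] in simp)

lemma pull_amortized:
  assumes fl: "fills_within_bound r0 fl s"
    and wf: "wf_tree r0 (Nd (Suc s) None cs)"
    and p: "pull fl cs = (Some a, cs', c)"
  shows "wf_tree r0 (Nd (Suc s) None cs') \<and> cell_size (Some a) \<le> 2 ^ (s - r0) \<and>
    real c + (\<Sum>t\<leftarrow>cs'. tree_pot r0 t) \<le> (\<Sum>t\<leftarrow>cs. tree_pot r0 t) + 1 - pull_gain r0 s a"
proof -
  have "has_item cs"
    using pull_None_iff[OF p] by simp
  then obtain i where i: "i < length cs"
    and p': "pull fl cs = (cell (cs ! i), cs[i := fst (fl (Nd (rank (cs ! i)) None (kids (cs ! i))))],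
                   1 + snd (fl (Nd (rank (cs ! i)) None (kids (cs ! i)))))"
    by (rule pull_item)
  define ch where "ch = cs ! i"
  have ch: "rank ch = s" "wf_tree r0 ch" "cell ch = Some a"
    using wf nth_mem[OF i] p p' unfolding ch_def by auto
  obtain ch' k where f: "fl (Nd s None (kids ch)) = (ch', k)"
    by (cases "fl (Nd s None (kids ch))")
  have a: "cell_size (Some a) \<le> 2 ^ (s - r0)"
    using ch by (cases ch) simp
  have res: "cs' = cs[i := ch']" "c = 1 + k"
    using p p' f ch(1) unfolding ch_def by auto
  have "wf_tree r0 (Nd s None (kids ch))"
    using wf_tree_clear_root[OF ch(2)] ch(1) by simp
  then have ch': "wf_tree r0 ch' \<and> rank ch' = s \<and>
      real k + tree_pot r0 ch' \<le> tree_pot r0 ch - pull_gain r0 s a"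
    using fills_within_boundD[OF fl _ f] tree_pot_with_root[OF ch(2,3)] ch(1) by simp
  have "(\<Sum>t\<leftarrow>cs'. tree_pot r0 t) = (\<Sum>t\<leftarrow>cs. tree_pot r0 t) - tree_pot r0 ch + tree_pot r0 ch'"
    using sum_list_list_update[of i "map (tree_pot r0) cs"] i res(1)
    unfolding ch_def by (simp add: map_update)
  moreover have "wf_tree r0 (Nd (Suc s) None cs')"
    using wf ch' res(1) by (auto dest!: set_update_subset_insert[THEN subsetD])
  ultimately show ?thesis
    using a ch' res(2) by simp
qed

lemma fill_step_low:
  assumes low: "Suc s \<le> r0" and fl: "fills_within_bound r0 fl s"
  shows "fills_within_bound r0 (fill_step r0 fl) (Suc s)"
  unfolding fills_within_bound_def
proof (intro allI impI)
  fix ks t' k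
  assume wf: "wf_tree r0 (Nd (Suc s) None ks)"
    and f: "fill_step r0 fl (Nd (Suc s) None ks) = (t', k)"
  obtain x cs k1 where p: "pull fl ks = (x, cs, k1)"
    by (cases "pull fl ks")
  have t': "t' = Nd (Suc s) x cs" "k = 1 + k1"
    using f p low by (auto simp: fill_step_def)
  have ks: "(\<Sum>t\<leftarrow>ks. tree_pot r0 t) = 0"
    using wf low by (auto intro!: sum_tree_pot_low_rank)
  have "wf_tree r0 t' \<and> real k1 \<le> 2 * real s + 3"
  proof (cases x)
    case None
    then show ?thesis
      using p pull_None_iff[OF p] pull_no_item[of ks fl] wf t'(1) by simp
  next
    case (Some a)
    have wf1: "wf_tree r0 (Nd (Suc s) None cs)" and "cell_size (Some a) \<le> 2 ^ (s - r0)"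
      and "real k1 + (\<Sum>t\<leftarrow>cs. tree_pot r0 t) \<le> (\<Sum>t\<leftarrow>ks. tree_pot r0 t) + 1 - pull_gain r0 s a"
      using pull_amortized[OF fl wf] p Some by simp_all
    moreover have "(\<Sum>t\<leftarrow>cs. tree_pot r0 t) = 0"
      using wf1 low by (auto intro!: sum_tree_pot_low_rank)
    ultimately show ?thesis
      using t'(1) Some low ks by (simp add: pull_gain_def)
  qed
  then show "wf_tree r0 t' \<and> rank t' = Suc s \<and>
      real k + tree_pot r0 t' \<le> fill_bound r0 (Suc s) ks + (\<Sum>t\<leftarrow>ks. tree_pot r0 t)"
    using t' low ks by (simp add: fill_bound_def)
qed

lemma second_pull_amortized:
  assumes r0: "2 \<le> r0" and high: "r0 \<le> s" and fl: "fills_within_bound r0 fl s"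
    and wf1: "wf_tree r0 (Nd (Suc s) None cs1)" and a: "cell_size (Some a) \<le> 2 ^ (s - r0)"
    and p2: "pull fl cs1 = (x2, cs2, k2)"
  shows "wf_tree r0 (Nd (Suc s) (corrupt (Some a) x2) cs2) \<and>
    real k2 + tree_pot r0 (Nd (Suc s) (corrupt (Some a) x2) cs2) \<le> kappa r0 * 2 ^ (Suc s - r0)
      - kappa r0 * real (cell_size (Some a)) + 2 * real s + 8 + (\<Sum>t\<leftarrow>cs1. tree_pot r0 t)"
proof -
  have cap: "2 ^ (Suc s - r0) = (2::nat) * 2 ^ (s - r0)"
    using high by (simp add: Suc_diff_le)
  show ?thesis
  proof (cases x2)
    case None
    then have "\<not> has_item cs1" "cs2 = cs1" "k2 = 1"
      using pull_None_iff[OF p2] p2 pull_no_item[of cs1 fl] by simp_all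
    then show ?thesis
      using wf1 a cap high None by (simp add: node_pot_def algebra_simps)
  next
    case (Some b)
    have wf2: "wf_tree r0 (Nd (Suc s) None cs2)" and b: "cell_size (Some b) \<le> 2 ^ (s - r0)"
      and k2: "real k2 + (\<Sum>t\<leftarrow>cs2. tree_pot r0 t) \<le> (\<Sum>t\<leftarrow>cs1. tree_pot r0 t) + 1 - pull_gain r0 s b"
      using pull_amortized[OF fl wf1] p2 Some by simp_all
    have "node_pot r0 (Suc s) (corrupt (Some a) x2) cs2 \<le> kappa r0 * 2 ^ (Suc s - r0)
        - kappa r0 * real (cell_size (Some a)) - kappa r0 * real (cell_size (Some b)) + 2 * real s + 12"
      using Some corrupt_Some_Some_neq_None[of a b]
      by (simp add: node_pot_def cell_size_corrupt algebra_simps)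
    moreover have "2 \<le> real s"
      using r0 high by simp
    ultimately show ?thesis
      using wf2 a b cap k2 pull_gain_ge[OF high, of b] Some high by (simp add: cell_size_corrupt)
  qed
qed

lemma fill_step_high:
  assumes r0: "2 \<le> r0" and high: "r0 \<le> s" and fl: "fills_within_bound r0 fl s"
  shows "fills_within_bound r0 (fill_step r0 fl) (Suc s)"
  unfolding fills_within_bound_def
proof (intro allI impI)
  fix ks t' k
  assume wf: "wf_tree r0 (Nd (Suc s) None ks)"
    and f: "fill_step r0 fl (Nd (Suc s) None ks) = (t', k)"
  obtain x1 cs1 k1 where p1: "pull fl ks = (x1, cs1, k1)"
    by (cases "pull fl ks")
  obtain x2 cs2 k2 where p2: "pull fl cs1 = (x2, cs2, k2)"
    by (cases "pull fl cs1")
  have t': "t' = Nd (Suc s) (corrupt x1 x2) cs2" "k = 1 + k1 + k2"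
    using f p1 p2 high by (auto simp: fill_step_def)
  show "wf_tree r0 t' \<and> rank t' = Suc s \<and>
      real k + tree_pot r0 t' \<le> fill_bound r0 (Suc s) ks + (\<Sum>t\<leftarrow>ks. tree_pot r0 t)"
  proof (cases x1)
    case None
    then have "\<not> has_item ks"
      using pull_None_iff[OF p1] by simp
    moreover from this have "x2 = None" "cs2 = ks" "k1 = 1" "k2 = 1"
      using p1 p2 pull_no_item[of ks fl] by auto
    ultimately show ?thesis
      using t' wf high None by (simp add: node_pot_def fill_bound_def)
  next
    case (Some a)
    have "has_item ks"
      using pull_None_iff[OF p1] Some by simp
    moreover have wf1: "wf_tree r0 (Nd (Suc s) None cs1)" and a: "cell_size (Some a) \<le> 2 ^ (s - r0)"
      and "real k1 + (\<Sum>t\<leftarrow>cs1. tree_pot r0 t) \<le> (\<Sum>t\<leftarrow>ks. tree_pot r0 t) + 1 - pull_gain r0 s a"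
      using pull_amortized[OF fl wf] p1 Some by simp_all
    ultimately show ?thesis
      using second_pull_amortized[OF r0 high fl wf1 a p2] pull_gain_ge[OF high, of a] t' Some high
      by (simp add: fill_bound_def)
  qed
qed

lemma fills_within_bound_fillf:
  assumes "2 \<le> r0"
  shows "fills_within_bound r0 (fillf (Suc s) r0) s"
proof (induction s)
  case 0
  show ?case
    unfolding fills_within_bound_def
    by (simp add: fill_step_def pull_def fill_bound_def)
next
  case (Suc s)
  show ?case
  proof (cases "Suc s \<le> r0")
    case True
    show ?thesis
      unfolding fillf.simps(2)[of "Suc s"] by (rule fill_step_low[OF True Suc.IH])
  next
    case False
    then have "r0 \<le> s"
      by simp
    then show ?thesis
      unfolding fillf.simps(2)[of "Suc s"] by (rule fill_step_high[OF assms _ Suc.IH])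
  qed
qed

lemma fill_amortized:
  assumes "2 \<le> r0" "wf_tree r0 (Nd s None ks)" "fill r0 (Nd s None ks) = (t', k)"
  shows "wf_tree r0 t' \<and> rank t' = s \<and>
    real k + tree_pot r0 t' \<le> fill_bound r0 s ks + (\<Sum>t\<leftarrow>ks. tree_pot r0 t)"
  using fills_within_boundD[OF fills_within_bound_fillf[OF assms(1)] assms(2)] assms(3)
  unfolding fill_def tree.sel(1) .

definition sorted_at_most_twice :: "'a::linorder list \<Rightarrow> bool" where
  "sorted_at_most_twice xs \<longleftrightarrow> sorted xs \<and> (\<forall>i. i + 2 < length xs \<longrightarrow> xs ! i < xs ! (i + 2))"

lemma sorted_at_most_twice_Cons:
  "sorted_at_most_twice (x # xs) \<longleftrightarrow>
     sorted_at_most_twice xs \<and> (\<forall>y\<in>set xs. x \<le> y) \<and> (\<forall>y\<in>set (drop 1 xs). x < y)"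
proof
  assume sx: "sorted_at_most_twice (x # xs)"
  have "x < y" if y: "y \<in> set (drop 1 xs)" for y
  proof -
    obtain i where "i < length (drop 1 xs)" "y = drop 1 xs ! i"
      using y unfolding in_set_conv_nth by blast
    then have i: "Suc i < length xs" "y = xs ! Suc i"
      by simp_all
    then have "x < xs ! 1"
      using sx unfolding sorted_at_most_twice_def by (auto dest: spec[of _ 0] simp: numeral_2_eq_2)
    also have "xs ! 1 \<le> y"
      using sx i unfolding sorted_at_most_twice_def by (simp add: sorted_nth_mono)
    finally show "x < y" .
  qed
  then show "sorted_at_most_twice xs \<and> (\<forall>y\<in>set xs. x \<le> y) \<and> (\<forall>y\<in>set (drop 1 xs). x < y)"
    using sx unfolding sorted_at_most_twice_def by (fastforce dest: spec[of _ "Suc _"])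
next
  assume xs: "sorted_at_most_twice xs \<and> (\<forall>y\<in>set xs. x \<le> y) \<and> (\<forall>y\<in>set (drop 1 xs). x < y)"
  have "x < xs ! 1" if "1 < length xs"
    using xs nth_mem[of 0 "drop 1 xs"] that by simp
  with xs show "sorted_at_most_twice (x # xs)"
    unfolding sorted_at_most_twice_def
    by (auto simp: nth_Cons split: nat.split)
qed

lemma sorted_at_most_twice_index_le:
  assumes "sorted_at_most_twice xs" "i < length xs"
  shows "i \<le> 2 * xs ! i + 1"
  using assms(2)
proof (induction i rule: less_induct)
  case (less i)
  show ?case
  proof (cases "i < 2")
    case False
    then have "i - 2 + 2 < length xs" "i - 2 + 2 = i"
      using less.prems by simp_all
    then have "xs ! (i - 2) < xs ! i"
      using assms(1) unfolding sorted_at_most_twice_def by metis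
    moreover have "i - 2 \<le> 2 * xs ! (i - 2) + 1"
      using less False by simp
    ultimately show ?thesis
      by linarith
  qed simp
qed

definition heap_inv :: "nat \<Rightarrow> ('k,'v) tree list \<Rightarrow> bool" where
  "heap_inv r0 ts \<longleftrightarrow> (\<forall>t\<in>set ts. wf_tree r0 t) \<and> sorted_at_most_twice (map rank ts)"

lemma heap_inv_update:
  assumes "heap_inv r0 ts" "j < length ts" "wf_tree r0 t" "rank t = rank (ts ! j)"
  shows "heap_inv r0 (ts[j := t])"
proof -
  have "map rank (ts[j := t]) = map rank ts"
    using assms(2,4) list_update_id[of "map rank ts" j] by (simp add: map_update)
  then show ?thesis
    using assms(1,3) unfolding heap_inv_def by (auto dest!: set_update_subset_insert[THEN subsetD])
qed

definition root_credit :: "nat \<Rightarrow> nat \<Rightarrow> real" where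
  "root_credit r0 r = 3 * real r + 6 + kappa r0 * 2 ^ Suc r / 2 ^ r0"

definition heap_pot :: "nat \<Rightarrow> ('k,'v) tree list \<Rightarrow> real" where
  "heap_pot r0 ts = (\<Sum>t\<leftarrow>ts. root_credit r0 (rank t) + tree_pot r0 t)"

lemma heap_pot_Nil [simp]: "heap_pot r0 [] = 0"
  by (simp add: heap_pot_def)

lemma heap_pot_Cons [simp]: "heap_pot r0 (t # ts) = root_credit r0 (rank t) + tree_pot r0 t + heap_pot r0 ts"
  by (simp add: heap_pot_def)

lemma heap_pot_update:
  assumes "j < length ts" "rank t = rank (ts ! j)"
  shows "heap_pot r0 (ts[j := t]) = heap_pot r0 ts - tree_pot r0 (ts ! j) + tree_pot r0 t"
  using sum_list_list_update[of j "map (\<lambda>t. root_credit r0 (rank t) + tree_pot r0 t) ts"] assms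
  by (simp add: heap_pot_def map_update)

lemma heap_pot_nonneg: "heap_inv r0 ts \<Longrightarrow> 0 \<le> heap_pot r0 ts"
  unfolding heap_pot_def heap_inv_def
  by (intro sum_list_nonneg) (auto intro!: add_nonneg_nonneg tree_pot_nonneg simp: root_credit_def kappa_def)

lemma root_credit_link: "1 + fill_bound r0 (Suc r) ks + root_credit r0 (Suc r) \<le> 3 * root_credit r0 r"
proof (cases "Suc r \<le> r0")
  case True
  have "0 \<le> kappa r0 * 2 ^ Suc r / 2 ^ r0"
    by (simp add: kappa_def)
  then show ?thesis
    using True by (simp add: fill_bound_def root_credit_def)
next
  case False
  then have "(2::real) ^ (Suc r - r0) = 2 ^ Suc r / 2 ^ r0"
    by (simp add: power_diff)
  then show ?thesis
    using False by (simp add: fill_bound_def root_credit_def)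
qed

lemma root_credit_0_le:
  assumes "2 \<le> r0"
  shows "root_credit r0 0 \<le> 13"
proof -
  have "8 * n + 10 \<le> 7 * 2 ^ n" if "2 \<le> n" for n :: nat
    using that
  proof (induction n rule: nat_induct_at_least)
    case (Suc n)
    have "(4::nat) \<le> 2 ^ n"
      using power_increasing[OF Suc.hyps, of "2::nat"] by simp
    then show ?case
      using Suc.IH by simp
  qed simp
  then have "real (8 * r0 + 10) \<le> real (7 * 2 ^ r0)"
    using assms by (simp only: of_nat_le_iff)
  then show ?thesis
    by (simp add: root_credit_def kappa_def divide_le_eq)
qed

lemma link_loop_amortized:
  "link_loop r0 ts = (ts', k) \<Longrightarrow> 2 \<le> r0 \<Longrightarrow> \<forall>t\<in>set ts. wf_tree r0 t \<Longrightarrow>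
    sorted (map rank ts) \<Longrightarrow> sorted_at_most_twice (map rank (tl ts)) \<Longrightarrow>
    heap_inv r0 ts' \<and> real k + heap_pot r0 ts' \<le> heap_pot r0 ts + 1"
proof (induction r0 ts arbitrary: ts' k rule: link_loop.induct)
  case (1 r0 t1 t2 t3 ts)
  show ?case
  proof (cases "rank t1 = rank t2 \<and> rank t2 = rank t3")
    case True
    obtain v kf where f: "fill r0 (Nd (Suc (rank t1)) None [t1, t2, t3]) = (v, kf)"
      by (cases "fill r0 (Nd (Suc (rank t1)) None [t1, t2, t3])")
    obtain ts2 k2 where l: "link_loop r0 (v # ts) = (ts2, k2)"
      by (cases "link_loop r0 (v # ts)")
    have res: "ts' = ts2" "k = 1 + kf + k2"
      using "1.prems"(1) True f l by auto
    have v: "wf_tree r0 v \<and> rank v = Suc (rank t1) \<and>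
        real kf + tree_pot r0 v \<le> fill_bound r0 (Suc (rank t1)) [t1, t2, t3] + (\<Sum>t\<leftarrow>[t1, t2, t3]. tree_pot r0 t)"
      using fill_amortized[OF "1.prems"(2) _ f] "1.prems"(3) True by simp
    have "sorted_at_most_twice (rank t2 # rank t3 # map rank ts)"
      using "1.prems"(5) by simp
    then have ts: "sorted_at_most_twice (map rank ts)" "\<forall>t\<in>set ts. rank t1 < rank t"
      using True by (simp_all add: sorted_at_most_twice_Cons)
    then have "sorted (map rank (v # ts))"
      using v by (auto simp: sorted_at_most_twice_def Suc_le_eq)
    then have "heap_inv r0 ts2 \<and> real k2 + heap_pot r0 ts2 \<le> heap_pot r0 (v # ts) + 1"
      using "1.IH"[OF True f[symmetric] refl l "1.prems"(2)] v "1.prems"(3) ts(1) by simp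
    then show ?thesis
      using res v root_credit_link[of r0 "rank t1" "[t1, t2, t3]"] True by simp
  next
    case False
    then have "link_loop r0 (t1 # t2 # t3 # ts) = (t1 # t2 # t3 # ts, 1)"
      by (simp only: link_loop.simps if_not_P[OF False] if_False)
    then have res: "ts' = t1 # t2 # t3 # ts" "k = 1"
      using "1.prems"(1) by simp_all
    have "rank t1 < rank t3"
      using "1.prems"(4) False by auto
    then have "sorted_at_most_twice (map rank (t1 # t2 # t3 # ts))"
      using "1.prems"(4,5) by (auto simp: sorted_at_most_twice_Cons)
    then show ?thesis
      using res "1.prems"(3) by (simp add: heap_inv_def)
  qed
qed (auto simp: heap_inv_def sorted_at_most_twice_def)

lemma ins_amortized:
  assumes "ins r0 e ts = (ts', k)" "heap_inv r0 ts" "2 \<le> r0"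
  shows "heap_inv r0 ts' \<and> real k + heap_pot r0 ts' \<le> heap_pot r0 ts + 16"
proof -
  obtain ts2 k2 where l: "link_loop r0 (Nd 0 (Some (e, [])) [] # ts) = (ts2, k2)"
    by (cases "link_loop r0 (Nd 0 (Some (e, [])) [] # ts)")
  have res: "ts' = ts2" "k = k2 + 2"
    using assms(1) l by (auto simp: ins_def)
  have "heap_inv r0 ts2 \<and> real k2 + heap_pot r0 ts2 \<le> heap_pot r0 (Nd 0 (Some (e, [])) [] # ts) + 1"
    using link_loop_amortized[OF l assms(3)] assms(2)
    by (simp add: heap_inv_def sorted_at_most_twice_def)
  then show ?thesis
    using res root_credit_0_le[OF assms(3)] by simp
qed

lemma min_root_less_length: "root_idx ts \<noteq> {} \<Longrightarrow> min_root ts < length ts"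
  using arg_min_if_finite(1)[of "root_idx ts"]
  unfolding min_root_def arg_min_on_def root_idx_def by auto

lemma tree_pot_remove_corrupted:
  assumes "wf_tree r0 t" "cell t = Some (e, C)" "x \<in> set C"
  defines "t' \<equiv> Nd (rank t) (Some (e, remove1 x C)) (kids t)"
  shows "wf_tree r0 t' \<and> tree_pot r0 t' = tree_pot r0 t + kappa r0"
proof (cases t)
  case (Nd s c ks)
  have C: "length (remove1 x C) = length C - 1" "C \<noteq> []"
    using assms(3) by (auto simp: length_remove1)
  have size: "Suc (length C) \<le> 2 ^ (s - r0)"
    using assms(1,2) Nd by simp
  then have "r0 < s"
    using C(2) by (cases "r0 < s") auto
  moreover have "real (length (remove1 x C)) = real (length C) - 1"
    using C by (cases C) auto
  ultimately show ?thesis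
    using assms(1,2) Nd C size unfolding t'_def by (auto simp: node_pot_def algebra_simps)
qed

lemma ext_step_amortized:
  assumes "ext_step r0 ts ts' k" "heap_inv r0 ts" "2 \<le> r0"
  shows "heap_inv r0 ts' \<and> real k + heap_pot r0 ts' \<le> heap_pot r0 ts + 4 * real r0 + 6"
  using assms
proof (induction rule: ext_step.induct)
  case (ext_corr ts j e C x)
  have j: "j < length ts"
    using min_root_less_length ext_corr.hyps(1,2) by simp
  then have wf_j: "wf_tree r0 (ts ! j)"
    using ext_corr.prems(1) unfolding heap_inv_def by simp
  show ?case
    using tree_pot_remove_corrupted[OF wf_j ext_corr.hyps(3,4)] heap_inv_update[OF ext_corr.prems(1) j]
      heap_pot_update[OF j] by (simp add: kappa_def)
next
  case (ext_own ts j e t' k)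
  have j: "j < length ts"
    using min_root_less_length ext_own.hyps(1,2) by simp
  then have wf_j: "wf_tree r0 (ts ! j)"
    using ext_own.prems(1) unfolding heap_inv_def by simp
  have t': "wf_tree r0 t' \<and> rank t' = rank (ts ! j) \<and>
      real k + tree_pot r0 t' \<le> tree_pot r0 (ts ! j) - pull_gain r0 (rank (ts ! j)) (e, [])"
    using fill_amortized[OF ext_own.prems(2) wf_tree_clear_root[OF wf_j] ext_own.hyps(4)]
      tree_pot_with_root[OF wf_j ext_own.hyps(3)] by simp
  txt \<open>The position of the root is bounded by its rank, so the credit released by its item
    pays for updating the suffix-min references.\<close>
  have "j \<le> 2 * rank (ts ! j) + 1"
    using sorted_at_most_twice_index_le[of "map rank ts" j] ext_own.prems(1) j
    by (simp add: heap_inv_def)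
  then have "2 + real j - pull_gain r0 (rank (ts ! j)) (e, []) \<le> 4 * real r0 + 6"
    by (simp add: pull_gain_def kappa_def)
  then show ?case
    using t' heap_inv_update[OF ext_own.prems(1) j] heap_pot_update[OF j] by simp
qed simp

lemma inserted_simps [simp]:
  "inserted [] = []"
  "inserted (Insert e # ops) = e # inserted ops"
  "inserted (ExtractMin # ops) = inserted ops"
  by (simp_all add: inserted_def)

lemma n_ext_simps [simp]:
  "n_ext [] = 0"
  "n_ext (Insert e # ops) = n_ext ops"
  "n_ext (ExtractMin # ops) = Suc (n_ext ops)"
  by (simp_all add: n_ext_def)

lemma exec_cost_le:
  assumes "exec r0 ts ops T" "heap_inv r0 ts" "2 \<le> r0"
  shows "real T \<le> heap_pot r0 ts + 16 * real (length (inserted ops)) + (4 * real r0 + 6) * real (n_ext ops)"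
  using assms
proof (induction rule: exec.induct)
  case (exec_nil ts)
  then show ?case
    using heap_pot_nonneg by simp
next
  case (exec_ins e ts ts' k ops c)
  then show ?case
    using ins_amortized[OF exec_ins.hyps(1) exec_ins.prems] by (simp add: algebra_simps)
next
  case (exec_ext ts ts' k ops c)
  then show ?case
    using ext_step_amortized[OF exec_ext.hyps(1) exec_ext.prems] by (simp add: algebra_simps)
qed

lemma log_inverse_ge_1:
  assumes "0 < \<epsilon>" "\<epsilon> \<le> 1 / 2"
  shows "1 \<le> log 2 (1 / \<epsilon>)"
proof -
  have "2 \<le> 1 / \<epsilon>"
    using assms by (simp add: field_simps)
  then show ?thesis
    using assms by (simp add: le_log_iff)
qed

lemma thr_le_log:
  assumes "0 < \<epsilon>" "\<epsilon> \<le> 1 / 2"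
  shows "real (thr \<epsilon>) \<le> 2 * log 2 (1 / \<epsilon>)"
proof -
  have L: "1 \<le> log 2 (1 / \<epsilon>)"
    using log_inverse_ge_1[OF assms] .
  then have "real (nat \<lceil>log 2 (1 / \<epsilon>)\<rceil>) \<le> log 2 (1 / \<epsilon>) + 1"
    by linarith
  moreover have "real (thr \<epsilon>) = 2 \<or> real (thr \<epsilon>) = real (nat \<lceil>log 2 (1 / \<epsilon>)\<rceil>)"
    by (simp add: thr_def max_def)
  ultimately show ?thesis
    using L by linarith
qed

theorem mainTheorem12:
  "\<exists>c::real. \<forall>(\<epsilon>::real) (ops :: ('k::linorder,'v) hop list) T.
     0 < \<epsilon> \<and> \<epsilon> \<le> 1/2 \<and> distinct (map fst (inserted ops)) \<and> exec (thr \<epsilon>) [] ops T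
     \<longrightarrow> real T \<le> c * (real (length (inserted ops)) + real (n_ext ops) * log 2 (1 / \<epsilon>))"
proof (intro exI allI impI)
  fix \<epsilon> :: real and ops :: "('k, 'v) hop list" and T
  assume "0 < \<epsilon> \<and> \<epsilon> \<le> 1/2 \<and> distinct (map fst (inserted ops)) \<and> exec (thr \<epsilon>) [] ops T"
  \<comment> \<open>distinct keys are needed for correctness only, not for the running time\<close>
  then have \<epsilon>: "0 < \<epsilon>" "\<epsilon> \<le> 1/2" and ex: "exec (thr \<epsilon>) [] ops T"
    by simp_all
  define L where "L = log 2 (1 / \<epsilon>)"
  have "2 \<le> thr \<epsilon>"
    by (simp add: thr_def)
  then have "real T \<le> 16 * real (length (inserted ops)) + (4 * real (thr \<epsilon>) + 6) * real (n_ext ops)"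
    using exec_cost_le[OF ex] by (simp add: heap_inv_def sorted_at_most_twice_def)
  also have "\<dots> \<le> 16 * real (length (inserted ops)) + 16 * L * real (n_ext ops)"
    using thr_le_log[OF \<epsilon>] log_inverse_ge_1[OF \<epsilon>] unfolding L_def
    by (intro add_left_mono mult_right_mono) auto
  finally show "real T \<le> 16 * (real (length (inserted ops)) + real (n_ext ops) * log 2 (1 / \<epsilon>))"
    unfolding L_def by (simp add: algebra_simps)
qed

end
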